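(* Let $(a_i)_{i\ge 1}$ be integers and let $f(x)=\prod_{i=1}^\infty (1+(-x)^i)^{a_i}\in 1+x\,\mathbb Z[[x]]$. Then $f(x)\,f(-x)\,f(x^2)$ is the square of an element of $1+x\,\mathbb Z[[x]]$ if and only if $a_{2i}\equiv 0 \pmod 2$ for all $i\ge 1$.
   Context: $\mathbb Z[[x]]$ denotes formal power series with integer coefficients; the infinite product converges $x$-adically, and $(1+(-x)^i)^{a_i}$ for negative $a_i$ means the inverse power series. *)

theory Defs
  imports "HOL-Computational_Algebra.Formal_Power_Series"
begin

definition fps_int_power :: "int fps \<Rightarrow> int \<Rightarrow> int fps" where
  "fps_int_power p k =
     (if 0 \<le> k then p ^ nat k else (THE q. p * q = 1) ^ nat (- k))"

end

theory Submission
  imports Defs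
begin

text \<open>
  Write \<open>\<phi>(p) = p(x) p(-x) p(x^2)\<close>; \<open>\<phi>\<close> is multiplicative and continuous for the
  \<open>x\<close>-adic topology. For a single factor \<open>u = 1 + (-x)^i\<close> one finds
  \<open>\<phi>(u) = (1 - x^(2i))^2\<close> for odd \<open>i\<close> and \<open>\<phi>(u) = (1 + x^i)^2 (1 + x^(2i))\<close> for even \<open>i\<close>.
  Hence \<open>\<phi>(f) = G^2 R\<close> with \<open>G \<in> 1 + x\<int>[[x]]\<close> and \<open>R\<close> the product of the factors
  \<open>1 + x^(2i)\<close> over the even \<open>i\<close> with \<open>a\<^sub>i\<close> odd, so \<open>\<phi>(f)\<close> is a square exactly when \<open>R\<close> is.
  If \<open>R \<noteq> 1\<close>, the lowest non-constant term of \<open>R\<close> is \<open>x^(4j)\<close> for the least \<open>j\<close> with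
  \<open>a\<^sub>2\<^sub>j\<close> odd. But for \<open>k \<in> 1 + x\<int>[[x]]\<close> the lowest non-zero coefficient of
  \<open>k^2 - 1 = (k - 1)(k + 1)\<close> is twice that of \<open>k - 1\<close>, hence even.
\<close>

unbundle fps_syntax

lemma fps_cutoff_mult:
  "fps_cutoff n (f * g) = fps_cutoff n (fps_cutoff n f * fps_cutoff n (g :: 'a::comm_semiring_1 fps))"
  by (rule fps_ext) (simp add: fps_cutoff_left_mult_nth fps_cutoff_right_mult_nth)

lemma fps_cutoff_mult_eq_one:
  assumes "fps_cutoff n p = fps_cutoff n 1" "fps_cutoff n q = fps_cutoff n (1 :: 'a::comm_semiring_1 fps)"
  shows "fps_cutoff n (p * q) = fps_cutoff n 1"
  by (subst fps_cutoff_mult) (simp add: assms flip: fps_cutoff_mult)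

lemma fps_cutoff_prod_eq_one:
  assumes "\<And>i. i \<in> A \<Longrightarrow> fps_cutoff n (h i) = fps_cutoff n (1 :: 'a::comm_semiring_1 fps)"
  shows "fps_cutoff n (\<Prod>i\<in>A. h i) = fps_cutoff n 1"
  using assms
proof (induction A rule: infinite_finite_induct)
  case (insert i A)
  then show ?case by (simp add: fps_cutoff_mult_eq_one)
qed simp_all

lemma fps_cutoff_power_eq_one:
  assumes "fps_cutoff n p = fps_cutoff n (1 :: 'a::comm_semiring_1 fps)"
  shows "fps_cutoff n (p ^ k) = fps_cutoff n 1"
  using fps_cutoff_prod_eq_one[of "{..<k}" n "\<lambda>_. p"] assms by simp

lemma fps_cutoff_right_inverse_eq_one:
  assumes "p * r = 1" "fps_cutoff n p = fps_cutoff n (1 :: 'a::comm_semiring_1 fps)"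
  shows "fps_cutoff n r = fps_cutoff n 1"
proof -
  have "fps_cutoff n r = fps_cutoff n (fps_cutoff n p * fps_cutoff n r)"
    using assms(2) by (simp flip: fps_cutoff_mult)
  also have "\<dots> = fps_cutoff n 1"
    using assms(1) by (simp flip: fps_cutoff_mult)
  finally show ?thesis .
qed

lemma tendsto_fps_mult:
  fixes f g :: "'b \<Rightarrow> 'a::ring_1 fps"
  assumes "(f \<longlongrightarrow> F) L" "(g \<longlongrightarrow> G) L"
  shows "((\<lambda>x. f x * g x) \<longlongrightarrow> F * G) L"
proof (rule tendsto_fpsI)
  fix n
  have "eventually (\<lambda>x. \<forall>k\<in>{..n}. f x $ k = F $ k \<and> g x $ k = G $ k) L"
    using assms by (intro eventually_ball_finite) (auto simp: tendsto_fps_iff intro: eventually_conj)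
  then show "eventually (\<lambda>x. (f x * g x) $ n = (F * G) $ n) L"
    by eventually_elim (simp add: fps_mult_nth)
qed

lemma tendsto_fps_compose:
  fixes f :: "'b \<Rightarrow> 'a::ring_1 fps"
  assumes "(f \<longlongrightarrow> F) L"
  shows "((\<lambda>x. f x oo s) \<longlongrightarrow> F oo s) L"
proof (rule tendsto_fpsI)
  fix n
  have "eventually (\<lambda>x. \<forall>k\<in>{..n}. f x $ k = F $ k) L"
    using assms by (intro eventually_ball_finite) (auto simp: tendsto_fps_iff)
  then show "eventually (\<lambda>x. (f x oo s) $ n = (F oo s) $ n) L"
    by eventually_elim (simp add: fps_compose_nth)
qed

lemma prod_fps_near_one_nth_stable:
  assumes "\<And>i. fps_cutoff i (h i) = fps_cutoff i (1 :: 'a::comm_semiring_1 fps)" "k \<le> n"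
  shows "(\<Prod>i=1..n. h i) $ k = (\<Prod>i=1..k. h i) $ k"
  using assms(2)
proof (induction n rule: dec_induct)
  case (step n)
  have "(\<Prod>i=1..Suc n. h i) $ k = ((\<Prod>i=1..n. h i) * fps_cutoff (Suc n) (h (Suc n))) $ k"
    using step by (simp add: prod.nat_ivl_Suc' fps_cutoff_right_mult_nth)
  also have "\<dots> = (\<Prod>i=1..n. h i) $ k"
    using step by (simp add: assms(1) fps_cutoff_right_mult_nth)
  finally show ?case using step by simp
qed simp

lemma LIMSEQ_prod_fps_near_one:
  fixes h :: "nat \<Rightarrow> 'a::comm_ring_1 fps"
  assumes "\<And>i. fps_cutoff i (h i) = fps_cutoff i 1"
  shows "(\<lambda>n. \<Prod>i=1..n. h i) \<longlonglongrightarrow> Abs_fps (\<lambda>k. (\<Prod>i=1..k. h i) $ k)"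
proof (rule tendsto_fpsI)
  fix k
  show "eventually (\<lambda>n. (\<Prod>i=1..n. h i) $ k = Abs_fps (\<lambda>k. (\<Prod>i=1..k. h i) $ k) $ k) sequentially"
    using eventually_ge_at_top[of k]
    by eventually_elim (subst prod_fps_near_one_nth_stable[OF assms]; simp)
qed

lemma even_nth_subdegree_square_minus_one:
  fixes k :: "int fps"
  assumes "k $ 0 = 1"
  shows "even ((k\<^sup>2 - 1) $ subdegree (k\<^sup>2 - 1))"
proof (cases "k = 1")
  case False
  have "k - 1 \<noteq> 0" "k + 1 \<noteq> 0" "(k + 1) $ 0 = 2"
    using False assms by (auto simp: fps_eq_iff dest: spec[of _ 0])
  moreover have factor: "k\<^sup>2 - 1 = (k - 1) * (k + 1)"
    by (simp add: algebra_simps power2_eq_square)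
  ultimately have "subdegree (k\<^sup>2 - 1) = subdegree (k - 1)"
    by simp
  then have "(k\<^sup>2 - 1) $ subdegree (k\<^sup>2 - 1) = (k - 1) $ subdegree (k - 1) * 2"
    by (simp only: factor nth_subdegree_mult_left \<open>(k + 1) $ 0 = 2\<close>)
  then show ?thesis by simp
qed simp

lemma fps_right_inverse_exists:
  "(p :: 'a::ring_1 fps) $ 0 = 1 \<Longrightarrow> \<exists>r. p * r = 1"
  using fps_right_inverse[of p 1] by auto

lemma fps_int_power_nonneg [simp]: "0 \<le> k \<Longrightarrow> fps_int_power p k = p ^ nat k"
  by (simp add: fps_int_power_def)

lemma fps_int_power_neg:
  assumes "p * r = 1" "k < 0"
  shows "fps_int_power p k = r ^ nat (- k)"
proof -
  have "(THE q. p * q = 1) = r"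
  proof (rule the_equality)
    fix q assume "p * q = 1"
    then show "q = r"
      using assms(1) by (metis mult.left_commute mult.right_neutral)
  qed (fact assms(1))
  with assms(2) show ?thesis by (simp add: fps_int_power_def)
qed

lemma fps_int_power_add_one:
  assumes "p $ 0 = 1"
  shows "fps_int_power p (k + 1) = fps_int_power p k * p"
proof -
  obtain r where r: "p * r = 1" using fps_right_inverse_exists[OF assms] ..
  show ?thesis
  proof (cases "0 \<le> k")
    case True
    then have "nat (k + 1) = Suc (nat k)" by simp
    with True show ?thesis by (simp add: mult.commute)
  next
    case False
    then have "nat (- k) = Suc (nat (- (k + 1)))" by simp
    with False r show ?thesis
      by (cases "k = -1") (simp_all add: fps_int_power_neg mult.assoc mult.commute[of r])
  qed
qed

lemma fps_int_power_add:
  assumes "p $ 0 = 1"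
  shows "fps_int_power p (k + l) = fps_int_power p k * fps_int_power p l"
proof -
  obtain r where r: "p * r = 1" using fps_right_inverse_exists[OF assms] ..
  have down: "fps_int_power p (m - 1) = fps_int_power p m * r" for m
    using fps_int_power_add_one[OF assms, of "m - 1"] r by (simp add: mult.assoc)
  show ?thesis
  proof (induction l rule: int_induct[where k = 0])
    case (step1 l)
    then show ?case
      using fps_int_power_add_one[OF assms, of "k + l"] fps_int_power_add_one[OF assms, of l]
      by (simp add: add.assoc mult.assoc)
  next
    case (step2 l)
    then show ?case
      using down[of "k + l"] down[of l] by (simp add: algebra_simps)
  qed simp
qed

lemma fps_int_power_half:
  assumes "p $ 0 = 1"
  shows "fps_int_power p k = (fps_int_power p (k div 2))\<^sup>2 * (if odd k then p else 1)"
proof -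
  have "fps_int_power p (k div 2 + k div 2 + k mod 2) =
      fps_int_power p (k div 2) * fps_int_power p (k div 2) * fps_int_power p (k mod 2)"
    by (simp only: fps_int_power_add[OF assms])
  moreover have "k div 2 + k div 2 + k mod 2 = k" by presburger
  ultimately have "fps_int_power p k =
      fps_int_power p (k div 2) * fps_int_power p (k div 2) * fps_int_power p (k mod 2)"
    by simp
  moreover have "fps_int_power p (k mod 2) = (if odd k then p else 1)"
    by (simp add: odd_iff_mod_2_eq_one even_iff_mod_2_eq_zero)
  ultimately show ?thesis by (simp add: power2_eq_square)
qed

lemma fps_int_power_mult:
  assumes "p $ 0 = 1" "q $ 0 = 1"
  shows "fps_int_power (p * q) k = fps_int_power p k * fps_int_power q k"
proof (cases "0 \<le> k")
  case True then show ?thesis by (simp add: power_mult_distrib)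
next
  case False
  obtain r s where "p * r = 1" "q * s = 1"
    using fps_right_inverse_exists assms by metis
  moreover from this have "(p * q) * (r * s) = 1" by (simp add: ac_simps)
  ultimately show ?thesis using False by (simp add: fps_int_power_neg power_mult_distrib)
qed

lemma fps_int_power_compose:
  assumes "p $ 0 = 1" "s $ 0 = 0"
  shows "fps_int_power p k oo s = fps_int_power (p oo s) k"
proof (cases "0 \<le> k")
  case True then show ?thesis using assms by (simp add: fps_compose_power)
next
  case False
  obtain r where r: "p * r = 1" using fps_right_inverse_exists[OF assms(1)] ..
  then have "(p oo s) * (r oo s) = 1"
    using assms by (simp flip: fps_compose_mult_distrib)
  then have "fps_int_power (p oo s) k = (r oo s) ^ nat (- k)"
    by (rule fps_int_power_neg) (use False in linarith)
  also have "\<dots> = r ^ nat (- k) oo s"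
    using assms(2) by (rule fps_compose_power)
  finally show ?thesis
    using fps_int_power_neg[OF r] False by simp
qed

lemma fps_cutoff_int_power_eq_one:
  assumes "p $ 0 = 1" "fps_cutoff n p = fps_cutoff n 1"
  shows "fps_cutoff n (fps_int_power p k) = fps_cutoff n 1"
proof (cases "0 \<le> k")
  case True then show ?thesis using assms by (simp add: fps_cutoff_power_eq_one)
next
  case False
  obtain r where r: "p * r = 1" using fps_right_inverse_exists[OF assms(1)] ..
  then have "fps_cutoff n r = fps_cutoff n 1"
    using assms(2) by (rule fps_cutoff_right_inverse_eq_one)
  then show ?thesis
    using fps_int_power_neg[OF r] False by (simp add: fps_cutoff_power_eq_one)
qed

definition triple_product :: "'a::idom fps \<Rightarrow> 'a fps" where
  "triple_product p = p * (p oo - fps_X) * (p oo fps_X ^ 2)"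

lemma triple_product_mult: "triple_product (p * q) = triple_product p * triple_product q"
  unfolding triple_product_def by (simp add: fps_compose_mult_distrib ac_simps)

lemma triple_product_prod: "triple_product (\<Prod>i\<in>A. h i) = (\<Prod>i\<in>A. triple_product (h i))"
  by (induction A rule: infinite_finite_induct) (simp_all add: triple_product_mult triple_product_def[of 1])

lemma tendsto_triple_product:
  "(f \<longlongrightarrow> F) L \<Longrightarrow> ((\<lambda>x. triple_product (f x)) \<longlongrightarrow> triple_product F) L"
  unfolding triple_product_def by (intro tendsto_fps_mult tendsto_fps_compose)

definition root_factor :: "nat \<Rightarrow> int \<Rightarrow> int fps" where
  "root_factor i k =
     (if odd i then fps_int_power (1 - fps_X ^ (2 * i)) k
      else fps_int_power (1 + fps_X ^ i) k * fps_int_power (1 + fps_X ^ (2 * i)) (k div 2))"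

definition residual_factor :: "nat \<Rightarrow> int \<Rightarrow> int fps" where
  "residual_factor i k = (if even i \<and> odd k then 1 + fps_X ^ (2 * i) else 1)"

lemma triple_product_factor:
  assumes "1 \<le> i"
  shows "triple_product (fps_int_power (1 + (- fps_X) ^ i) k) =
           (root_factor i k)\<^sup>2 * residual_factor i k"
proof -
  have u0: "(1 + (- fps_X) ^ i :: int fps) $ 0 = 1" using assms by simp
  have "fps_int_power (1 + (- fps_X) ^ i) k oo s = fps_int_power (1 + (- s) ^ i) k"
    if "s $ 0 = 0" for s :: "int fps"
    using that by (simp add: fps_int_power_compose[OF u0] fps_compose_add_distrib fps_compose_uminus
                       flip: fps_compose_power)
  from this[of "- fps_X"] this[of "fps_X\<^sup>2"]
  have "triple_product (fps_int_power (1 + (- fps_X) ^ i) k) =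
          fps_int_power (1 + (- fps_X) ^ i) k * fps_int_power (1 + fps_X ^ i) k
            * fps_int_power (1 + (- fps_X\<^sup>2) ^ i) k"
    unfolding triple_product_def by simp
  also have "\<dots> = (root_factor i k)\<^sup>2 * residual_factor i k"
  proof (cases "odd i")
    case True
    have "fps_int_power (1 - fps_X ^ i) k * fps_int_power (1 + fps_X ^ i) k =
            fps_int_power ((1 - fps_X ^ i) * (1 + fps_X ^ i)) k"
      using assms by (simp add: fps_int_power_mult)
    also have "(1 - fps_X ^ i) * (1 + fps_X ^ i) = (1 - fps_X ^ (2 * i) :: int fps)"
      by (simp add: algebra_simps power_mult power2_eq_square)
    finally show ?thesis
      using True by (simp add: root_factor_def residual_factor_def power2_eq_square power_mult)
  next
    case False
    have "(- fps_X :: int fps) ^ i = fps_X ^ i" "(- fps_X\<^sup>2 :: int fps) ^ i = fps_X ^ (2 * i)"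
      using False by (simp_all add: power_mult)
    moreover have "fps_int_power (1 + fps_X ^ (2 * i)) k =
            (fps_int_power (1 + fps_X ^ (2 * i)) (k div 2))\<^sup>2 * (if odd k then 1 + fps_X ^ (2 * i) else 1)"
      using assms by (intro fps_int_power_half) simp
    ultimately show ?thesis
      using False by (simp add: root_factor_def residual_factor_def power_mult_distrib ac_simps)
        (simp add: power2_eq_square)
  qed
  finally show ?thesis .
qed

lemma fps_cutoff_root_factor: "fps_cutoff i (root_factor i k) = fps_cutoff i 1"
proof -
  have near_one: "fps_cutoff i (1 + c * fps_X ^ t) = fps_cutoff i 1" if "i \<le> t" for c :: "int fps" and t
    using that by (auto simp: fps_eq_iff fps_X_power_mult_right_nth)
  have power_near_one: "fps_cutoff i (fps_int_power (1 + c * fps_X ^ t) l) = fps_cutoff i 1"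
    if "i \<le> t" "1 \<le> t" for c t l
    using that by (intro fps_cutoff_int_power_eq_one near_one) auto
  from power_near_one[of "2 * i" "-1" k] power_near_one[of i 1 k] power_near_one[of "2 * i" 1 "k div 2"]
  show ?thesis
    by (cases "i = 0") (auto simp: root_factor_def intro: fps_cutoff_mult_eq_one)
qed

lemma fps_cutoff_residual_factor:
  "n \<le> 2 * i \<Longrightarrow> fps_cutoff n (residual_factor i k) = fps_cutoff n 1"
  by (auto simp: residual_factor_def fps_eq_iff)

lemma square_mult_square_iff:
  fixes G R :: "'a::comm_ring_1 fps"
  assumes "G $ 0 = 1"
  shows "(\<exists>g. g $ 0 = 1 \<and> G\<^sup>2 * R = g\<^sup>2) \<longleftrightarrow> (\<exists>h. h $ 0 = 1 \<and> R = h\<^sup>2)"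
proof
  assume "\<exists>g. g $ 0 = 1 \<and> G\<^sup>2 * R = g\<^sup>2"
  then obtain g where g: "g $ 0 = 1" "G\<^sup>2 * R = g\<^sup>2" by blast
  obtain r where r: "G * r = 1" using fps_right_inverse_exists[OF assms] ..
  then have r0: "r $ 0 = 1" using assms by (metis fps_mult_nth_0 fps_one_nth mult_1)
  have "R = (G * r)\<^sup>2 * R" using r by simp
  also have "\<dots> = (G\<^sup>2 * R) * r\<^sup>2" by (simp add: power_mult_distrib ac_simps)
  also have "\<dots> = (g * r)\<^sup>2" using g(2) by (simp add: power_mult_distrib)
  finally have "R = (g * r)\<^sup>2" .
  with r0 show "\<exists>h. h $ 0 = 1 \<and> R = h\<^sup>2" using g(1) by (intro exI[of _ "g * r"]) simp
next
  assume "\<exists>h. h $ 0 = 1 \<and> R = h\<^sup>2"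
  then obtain h where "h $ 0 = 1" "R = h\<^sup>2" by blast
  with assms show "\<exists>g. g $ 0 = 1 \<and> G\<^sup>2 * R = g\<^sup>2"
    by (intro exI[of _ "G * h"]) (simp add: power_mult_distrib)
qed

lemma residual_product_lowest_terms:
  assumes "1 \<le> j" "odd (a (2 * j))" "\<And>j'. 1 \<le> j' \<Longrightarrow> j' < j \<Longrightarrow> even (a (2 * j'))"
    and "k \<le> 4 * j"
  shows "(\<Prod>i=1..4*j. residual_factor i (a i)) $ k = (1 + fps_X ^ (4 * j) :: int fps) $ k"
proof -
  define T where "T = (\<Prod>i\<in>{1..4*j} - {2*j}. residual_factor i (a i))"
  have split: "(\<Prod>i=1..4*j. residual_factor i (a i)) = (1 + fps_X ^ (4 * j)) * T"
    unfolding T_def using assms(1,2) by (subst prod.remove[of _ "2 * j"]) (auto simp: residual_factor_def)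
  have T: "fps_cutoff (Suc (4 * j)) T = fps_cutoff (Suc (4 * j)) 1"
    unfolding T_def
  proof (rule fps_cutoff_prod_eq_one)
    fix i assume i: "i \<in> {1..4*j} - {2*j}"
    show "fps_cutoff (Suc (4 * j)) (residual_factor i (a i)) = fps_cutoff (Suc (4 * j)) 1"
    proof (cases "even i \<and> odd (a i)")
      case True
      then obtain j' where j': "i = 2 * j'" by blast
      with True i assms(3) have "j < j'" by (cases "j' < j") auto
      with j' show ?thesis by (intro fps_cutoff_residual_factor) simp
    next
      case False
      then show ?thesis by (subst residual_factor_def) (simp only: False if_False)
    qed
  qed
  have "((1 + fps_X ^ (4 * j)) * T) $ k = ((1 + fps_X ^ (4 * j)) * fps_cutoff (Suc (4 * j)) T) $ k"
    using assms(4) by (simp add: fps_cutoff_right_mult_nth)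
  also have "\<dots> = (1 + fps_X ^ (4 * j)) $ k"
    by (simp add: T fps_cutoff_one)
  finally show ?thesis
    unfolding split .
qed

lemma residual_limit_square_iff:
  assumes lim: "(\<lambda>n. \<Prod>i=1..n. residual_factor i (a i)) \<longlonglongrightarrow> R"
  shows "(\<exists>h. h $ 0 = 1 \<and> R = h\<^sup>2) \<longleftrightarrow> (\<forall>i\<ge>1. a (2 * i) mod 2 = 0)"
proof
  assume "\<forall>i\<ge>1. a (2 * i) mod 2 = 0"
  then have "residual_factor i (a i) = 1" if "1 \<le> i" for i
    using that by (auto simp: residual_factor_def elim!: evenE)
  then have "(\<lambda>n. \<Prod>i=1..n. residual_factor i (a i)) = (\<lambda>n. 1)" by simp
  with lim have "R = 1" by (simp add: LIMSEQ_const_iff)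
  then show "\<exists>h. h $ 0 = 1 \<and> R = h\<^sup>2" by (intro exI[of _ 1]) simp
next
  assume "\<exists>h. h $ 0 = 1 \<and> R = h\<^sup>2"
  then obtain h where h: "h $ 0 = 1" "R = h\<^sup>2" by blast
  show "\<forall>i\<ge>1. a (2 * i) mod 2 = 0"
  proof (rule ccontr)
    assume "\<not> (\<forall>i\<ge>1. a (2 * i) mod 2 = 0)"
    then have "\<exists>j. 1 \<le> j \<and> odd (a (2 * j))" by auto
    then obtain j where j: "1 \<le> j" "odd (a (2 * j))"
      and least: "\<And>j'. 1 \<le> j' \<Longrightarrow> j' < j \<Longrightarrow> even (a (2 * j'))"
      unfolding exists_least_iff[where P = "\<lambda>j. 1 \<le> j \<and> odd (a (2 * j))"] by blast
    have near_one: "fps_cutoff i (residual_factor i (a i)) = fps_cutoff i 1" for i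
      by (rule fps_cutoff_residual_factor) simp
    have R_eq: "R = Abs_fps (\<lambda>k. (\<Prod>i=1..k. residual_factor i (a i)) $ k)"
      using lim LIMSEQ_prod_fps_near_one[OF near_one] by (rule LIMSEQ_unique)
    have R: "R $ k = (1 + fps_X ^ (4 * j)) $ k" if "k \<le> 4 * j" for k
    proof -
      have "R $ k = (\<Prod>i=1..k. residual_factor i (a i)) $ k"
        using R_eq by simp
      also have "\<dots> = (\<Prod>i=1..4*j. residual_factor i (a i)) $ k"
        by (rule prod_fps_near_one_nth_stable[OF near_one that, symmetric])
      also have "\<dots> = (1 + fps_X ^ (4 * j)) $ k"
        by (rule residual_product_lowest_terms[where a = a, OF j least that])
      finally show ?thesis .
    qed
    have "subdegree (R - 1) = 4 * j"
      by (rule subdegreeI) (use R j(1) in auto)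
    then have "odd ((h\<^sup>2 - 1) $ subdegree (h\<^sup>2 - 1))"
      using R[of "4 * j"] j(1) h(2) by simp
    then show False
      using even_nth_subdegree_square_minus_one[OF h(1)] by simp
  qed
qed

theorem theorem4p1:
  fixes a :: "nat \<Rightarrow> int" and f :: "int fps"
  assumes "(\<lambda>n. \<Prod>i\<in>{1..n}. fps_int_power (1 + (- fps_X) ^ i) (a i)) \<longlonglongrightarrow> f"
  shows "(\<exists>g :: int fps. fps_nth g 0 = 1 \<and> f * (f oo (- fps_X)) * (f oo fps_X ^ 2) = g ^ 2)
         \<longleftrightarrow> (\<forall>i\<ge>1. a (2 * i) mod 2 = 0)"
proof -
  define G where "G = (\<lambda>n. \<Prod>i=1..n. root_factor i (a i))"
  define R where "R = (\<lambda>n. \<Prod>i=1..n. residual_factor i (a i))"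
  define G_lim where "G_lim = Abs_fps (\<lambda>k. G k $ k)"
  define R_lim where "R_lim = Abs_fps (\<lambda>k. R k $ k)"
  have G: "G \<longlonglongrightarrow> G_lim"
    unfolding G_def G_lim_def by (intro LIMSEQ_prod_fps_near_one fps_cutoff_root_factor)
  have R: "R \<longlonglongrightarrow> R_lim"
    unfolding R_def R_lim_def by (intro LIMSEQ_prod_fps_near_one fps_cutoff_residual_factor) simp
  have "triple_product (\<Prod>i=1..n. fps_int_power (1 + (- fps_X) ^ i) (a i)) = (G n)\<^sup>2 * R n" for n
    by (simp add: G_def R_def triple_product_prod triple_product_factor prod.distrib prod_power_distrib)
  with tendsto_triple_product[OF assms] have "(\<lambda>n. (G n)\<^sup>2 * R n) \<longlonglongrightarrow> triple_product f"
    by simp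
  moreover have "(\<lambda>n. (G n)\<^sup>2 * R n) \<longlonglongrightarrow> G_lim\<^sup>2 * R_lim"
    unfolding power2_eq_square by (intro tendsto_fps_mult G R)
  ultimately have "f * (f oo - fps_X) * (f oo fps_X ^ 2) = G_lim\<^sup>2 * R_lim"
    unfolding triple_product_def by (rule LIMSEQ_unique)
  moreover have "G_lim $ 0 = 1" by (simp add: G_lim_def G_def)
  ultimately show ?thesis
    using square_mult_square_iff[of G_lim R_lim] residual_limit_square_iff[OF R[unfolded R_def]]
    by simp
qed

end
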